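(* For every $i\in\mathcal U$ and every propositional formula $F$: the sequent $B\to T(i,\neg F.\emptyset,\emptyset.1)$ is provable if and only if $F$ is a tautology ($\models F$).
   Context: The theory $\mathbf B$: first-order theory with binary infix function symbol "$.$", predicates $T(i,a,u)$, $U(x,s,z,q,j,i,u)$, and single axiom $B$, the conjunction of the universal closures of: (1) $T(i,a,u)\supset U(\emptyset,\emptyset,a.\emptyset,1,i,i,u)$; (2) $U(\emptyset,\emptyset,a.\emptyset,1,i,i,u)\supset T(i,a,u)$; (3) $U(x,s,z,0,i,i,x)$; (4) $U(x,v,r.z,p,i,i,u)\supset U(x.v,s,z,q,\,q.s.p.r.0.j,\,i,u)$; (5) $U(x.r,v,z,p,i,i,u)\supset U(x,s,v.z,q,\,q.s.p.r.1.j,\,i,u)$; (6) $U(x,s,z,q,j,i,u)\supset U(x,s,z,q,\,q'.s'.p.r.d.j,\,i,u)$. In the intended interpretation $T(i,a,u)$ means the Turing machine with code $i$ (a list of quintuples $q.s.p.r.d$) on input list $a$ halts with output $u$; a propositional formula $F$ is given as input list $F.\emptyset$. $\mathcal U$ is the set of deterministic Turing machine codes (no two quintuples with the same $q.s$ and different $p.r.d$) that on every input $F.\emptyset$, $F$ a propositional formula, halt with output $\emptyset.0$ if $F$ is satisfiable and $\emptyset.1$ if $F$ is unsatisfiable. *)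

theory Defs
  imports Main
begin

datatype form = PVar nat | PBot | PNeg form | PAnd form form | POr form form | PImp form form

fun peval :: "(nat \<Rightarrow> bool) \<Rightarrow> form \<Rightarrow> bool" where
  "peval v (PVar n) = v n"
| "peval v PBot = False"
| "peval v (PNeg f) = (\<not> peval v f)"
| "peval v (PAnd f g) = (peval v f \<and> peval v g)"
| "peval v (POr f g) = (peval v f \<or> peval v g)"
| "peval v (PImp f g) = (peval v f \<longrightarrow> peval v g)"

definition satisfiable :: "form \<Rightarrow> bool" where
  "satisfiable f \<longleftrightarrow> (\<exists>v. peval v f)"

definition tautology :: "form \<Rightarrow> bool" where
  "tautology f \<longleftrightarrow> (\<forall>v. peval v f)"

datatype gterm = GEmp | GZero | GOne | GDot gterm gterm (infixr "\<cdot>" 70)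

section \<open>Intended interpretation of U and T (least relation closed under axioms (3)-(6))\<close>

text \<open>The dot is read right-associatively: q.s.p.r.d.j = q.(s.(p.(r.(d.j)))).\<close>

inductive Ured :: "gterm \<Rightarrow> gterm \<Rightarrow> gterm \<Rightarrow> gterm \<Rightarrow> gterm \<Rightarrow> gterm \<Rightarrow> gterm \<Rightarrow> bool" where
  halt: "Ured x s z GZero i i x"
| left: "Ured x v (r \<cdot> z) p i i u \<Longrightarrow> Ured (x \<cdot> v) s z q (q \<cdot> s \<cdot> p \<cdot> r \<cdot> GZero \<cdot> j) i u"
| right: "Ured (x \<cdot> r) v z p i i u \<Longrightarrow> Ured x s (v \<cdot> z) q (q \<cdot> s \<cdot> p \<cdot> r \<cdot> GOne \<cdot> j) i u"
| skip: "Ured x s z q j i u \<Longrightarrow> Ured x s z q (q' \<cdot> s' \<cdot> p \<cdot> r \<cdot> d \<cdot> j) i u"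

definition Tsem :: "gterm \<Rightarrow> gterm \<Rightarrow> gterm \<Rightarrow> bool" where
  "Tsem i a u \<longleftrightarrow> Ured GEmp GEmp (a \<cdot> GEmp) GOne i i u"

section \<open>Turing machine codes\<close>

inductive is_code :: "gterm \<Rightarrow> bool" where
  "is_code GEmp"
| "is_code j \<Longrightarrow> d \<in> {GZero, GOne} \<Longrightarrow> is_code (q \<cdot> s \<cdot> p \<cdot> r \<cdot> d \<cdot> j)"

fun quints :: "gterm \<Rightarrow> (gterm \<times> gterm \<times> gterm \<times> gterm \<times> gterm) set" where
  "quints (q \<cdot> s \<cdot> p \<cdot> r \<cdot> d \<cdot> j) = insert (q, s, p, r, d) (quints j)"
| "quints _ = {}"

definition deterministic :: "gterm \<Rightarrow> bool" where
  "deterministic i \<longleftrightarrow>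
     (\<forall>q s p r d p' r' d'. (q, s, p, r, d) \<in> quints i \<and> (q, s, p', r', d') \<in> quints i
        \<longrightarrow> (p, r, d) = (p', r', d'))"

definition halts_with :: "gterm \<Rightarrow> gterm \<Rightarrow> gterm \<Rightarrow> bool" where
  "halts_with i a u \<longleftrightarrow> {w. Tsem i a w} = {u}"

text \<open>The set U of deciders for propositional satisfiability, relative to the encoding
  enc of propositional formulas as ground terms.\<close>
definition Udec :: "(form \<Rightarrow> gterm) \<Rightarrow> gterm set" where
  "Udec enc = {i. is_code i \<and> deterministic i \<and>
     (\<forall>F. (satisfiable F \<longrightarrow> halts_with i (enc F \<cdot> GEmp) (GEmp \<cdot> GZero)) \<and>
          (\<not> satisfiable F \<longrightarrow> halts_with i (enc F \<cdot> GEmp) (GEmp \<cdot> GOne)))}"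

section \<open>First-order syntax (locally nameless: free variables Fv, de Bruijn bound variables Bv)\<close>

datatype tm = Fv nat | Bv nat | CEmp | CZero | COne | CDot tm tm

datatype pred = PT | PU

datatype fm = Bot | Atom pred "tm list" | Imp fm fm | Conj fm fm | Disj fm fm | All fm | Ex fm

fun emb :: "gterm \<Rightarrow> tm" where
  "emb GEmp = CEmp" | "emb GZero = CZero" | "emb GOne = COne"
| "emb (GDot a b) = CDot (emb a) (emb b)"

fun closed_tm :: "tm \<Rightarrow> bool" where
  "closed_tm (Bv n) = False"
| "closed_tm (CDot a b) = (closed_tm a \<and> closed_tm b)"
| "closed_tm _ = True"

fun fv_tm :: "tm \<Rightarrow> nat set" where
  "fv_tm (Fv x) = {x}"
| "fv_tm (CDot a b) = fv_tm a \<union> fv_tm b"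
| "fv_tm _ = {}"

fun fv_fm :: "fm \<Rightarrow> nat set" where
  "fv_fm Bot = {}"
| "fv_fm (Atom P ts) = (\<Union>t\<in>set ts. fv_tm t)"
| "fv_fm (Imp A B) = fv_fm A \<union> fv_fm B"
| "fv_fm (Conj A B) = fv_fm A \<union> fv_fm B"
| "fv_fm (Disj A B) = fv_fm A \<union> fv_fm B"
| "fv_fm (All A) = fv_fm A"
| "fv_fm (Ex A) = fv_fm A"

fun inst_tm :: "nat \<Rightarrow> tm \<Rightarrow> tm \<Rightarrow> tm" where
  "inst_tm k t (Bv n) = (if n < k then Bv n else if n = k then t else Bv (n - 1))"
| "inst_tm k t (CDot a b) = CDot (inst_tm k t a) (inst_tm k t b)"
| "inst_tm k t u = u"

fun inst_fm :: "nat \<Rightarrow> tm \<Rightarrow> fm \<Rightarrow> fm" where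
  "inst_fm k t Bot = Bot"
| "inst_fm k t (Atom P ts) = Atom P (map (inst_tm k t) ts)"
| "inst_fm k t (Imp A B) = Imp (inst_fm k t A) (inst_fm k t B)"
| "inst_fm k t (Conj A B) = Conj (inst_fm k t A) (inst_fm k t B)"
| "inst_fm k t (Disj A B) = Disj (inst_fm k t A) (inst_fm k t B)"
| "inst_fm k t (All A) = All (inst_fm (Suc k) t A)"
| "inst_fm k t (Ex A) = Ex (inst_fm (Suc k) t A)"

fun abst_tm :: "nat \<Rightarrow> nat \<Rightarrow> tm \<Rightarrow> tm" where
  "abst_tm k x (Fv y) = (if y = x then Bv k else Fv y)"
| "abst_tm k x (Bv n) = (if n < k then Bv n else Bv (Suc n))"
| "abst_tm k x (CDot a b) = CDot (abst_tm k x a) (abst_tm k x b)"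
| "abst_tm k x u = u"

fun abst_fm :: "nat \<Rightarrow> nat \<Rightarrow> fm \<Rightarrow> fm" where
  "abst_fm k x Bot = Bot"
| "abst_fm k x (Atom P ts) = Atom P (map (abst_tm k x) ts)"
| "abst_fm k x (Imp A B) = Imp (abst_fm k x A) (abst_fm k x B)"
| "abst_fm k x (Conj A B) = Conj (abst_fm k x A) (abst_fm k x B)"
| "abst_fm k x (Disj A B) = Disj (abst_fm k x A) (abst_fm k x B)"
| "abst_fm k x (All A) = All (abst_fm (Suc k) x A)"
| "abst_fm k x (Ex A) = Ex (abst_fm (Suc k) x A)"

definition univ_closure :: "fm \<Rightarrow> fm" where
  "univ_closure A = foldr (\<lambda>x B. All (abst_fm 0 x B)) (sorted_list_of_set (fv_fm A)) A"

section \<open>Classical first-order natural deduction (without equality)\<close>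

inductive nd :: "fm list \<Rightarrow> fm \<Rightarrow> bool" where
  Assum: "A \<in> set G \<Longrightarrow> nd G A"
| ImpI: "nd (A # G) B \<Longrightarrow> nd G (Imp A B)"
| ImpE: "nd G (Imp A B) \<Longrightarrow> nd G A \<Longrightarrow> nd G B"
| ConjI: "nd G A \<Longrightarrow> nd G B \<Longrightarrow> nd G (Conj A B)"
| ConjE1: "nd G (Conj A B) \<Longrightarrow> nd G A"
| ConjE2: "nd G (Conj A B) \<Longrightarrow> nd G B"
| DisjI1: "nd G A \<Longrightarrow> nd G (Disj A B)"
| DisjI2: "nd G B \<Longrightarrow> nd G (Disj A B)"
| DisjE: "nd G (Disj A B) \<Longrightarrow> nd (A # G) C \<Longrightarrow> nd (B # G) C \<Longrightarrow> nd G C"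
| Class: "nd (Imp A Bot # G) Bot \<Longrightarrow> nd G A"
| AllI: "nd G (inst_fm 0 (Fv x) A) \<Longrightarrow> x \<notin> fv_fm A \<Longrightarrow> x \<notin> (\<Union>B\<in>set G. fv_fm B)
          \<Longrightarrow> nd G (All A)"
| AllE: "nd G (All A) \<Longrightarrow> closed_tm t \<Longrightarrow> nd G (inst_fm 0 t A)"
| ExI: "nd G (inst_fm 0 t A) \<Longrightarrow> closed_tm t \<Longrightarrow> nd G (Ex A)"
| ExE: "nd G (Ex A) \<Longrightarrow> nd (inst_fm 0 (Fv x) A # G) B \<Longrightarrow> x \<notin> fv_fm A \<Longrightarrow> x \<notin> fv_fm B
          \<Longrightarrow> x \<notin> (\<Union>C\<in>set G. fv_fm C) \<Longrightarrow> nd G B"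

definition TT :: "tm \<Rightarrow> tm \<Rightarrow> tm \<Rightarrow> fm" where
  "TT i a u = Atom PT [i, a, u]"

definition UU :: "tm \<Rightarrow> tm \<Rightarrow> tm \<Rightarrow> tm \<Rightarrow> tm \<Rightarrow> tm \<Rightarrow> tm \<Rightarrow> fm" where
  "UU x s z q j i u = Atom PU [x, s, z, q, j, i, u]"

definition axB :: fm where
  "axB = (let x = Fv 0; s = Fv 1; z = Fv 2; q = Fv 3; j = Fv 4; i = Fv 5; u = Fv 6; a = Fv 7;
              v = Fv 8; r = Fv 9; p = Fv 10; d = Fv 11; q' = Fv 12; s' = Fv 13;
              quint = (\<lambda>q s p r d j. CDot q (CDot s (CDot p (CDot r (CDot d j)))));
              B1 = Imp (TT i a u) (UU CEmp CEmp (CDot a CEmp) COne i i u);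
              B2 = Imp (UU CEmp CEmp (CDot a CEmp) COne i i u) (TT i a u);
              B3 = UU x s z CZero i i x;
              B4 = Imp (UU x v (CDot r z) p i i u) (UU (CDot x v) s z q (quint q s p r CZero j) i u);
              B5 = Imp (UU (CDot x r) v z p i i u) (UU x s (CDot v z) q (quint q s p r COne j) i u);
              B6 = Imp (UU x s z q j i u) (UU x s z q (quint q' s' p r d j) i u)
          in Conj (univ_closure B1) (Conj (univ_closure B2) (Conj (univ_closure B3)
               (Conj (univ_closure B4) (Conj (univ_closure B5) (univ_closure B6))))))"

end

theory Submission
  imports Defs
begin

text \<open>
  The atom T(i,a,u) with ground arguments is derivable from the axiom B
  exactly when it holds in the intended interpretation, i.e. when Tsem i a u.
  (1) Soundness: interpret formulas in the term model whose universe is the set of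
      ground terms, with T read as Tsem and U as Ured.  Natural deduction is sound for
      this semantics and every conjunct of B holds, so a derivable ground T-atom is true.
  (2) Completeness for T-atoms: every clause (3)-(6) of B is the universal closure of a
      formula whose ground instances are derivable; by rule induction on Ured each true
      ground U-atom is derivable, and clause (2) transfers this to T.
  For a decider i in U, Tsem i (\<not>F).\<emptyset> \<emptyset>.1 holds iff \<not>F is unsatisfiable, i.e. iff F is
  a tautology, which gives the theorem.
\<close>

section \<open>Term-model semantics of first-order formulas\<close>

fun evt :: "(nat \<Rightarrow> gterm) \<Rightarrow> (nat \<Rightarrow> gterm) \<Rightarrow> tm \<Rightarrow> gterm" where
  "evt \<sigma> e (Fv x) = \<sigma> x"
| "evt \<sigma> e (Bv n) = e n"
| "evt \<sigma> e CEmp = GEmp"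
| "evt \<sigma> e CZero = GZero"
| "evt \<sigma> e COne = GOne"
| "evt \<sigma> e (CDot a b) = GDot (evt \<sigma> e a) (evt \<sigma> e b)"

fun semp :: "pred \<Rightarrow> gterm list \<Rightarrow> bool" where
  "semp PT [i, a, u] = Tsem i a u"
| "semp PU [x, s, z, q, j, i, u] = Ured x s z q j i u"
| "semp _ _ = False"

fun sem :: "(nat \<Rightarrow> gterm) \<Rightarrow> (nat \<Rightarrow> gterm) \<Rightarrow> fm \<Rightarrow> bool" where
  "sem \<sigma> e Bot = False"
| "sem \<sigma> e (Atom P ts) = semp P (map (evt \<sigma> e) ts)"
| "sem \<sigma> e (Imp A B) = (sem \<sigma> e A \<longrightarrow> sem \<sigma> e B)"
| "sem \<sigma> e (Conj A B) = (sem \<sigma> e A \<and> sem \<sigma> e B)"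
| "sem \<sigma> e (Disj A B) = (sem \<sigma> e A \<or> sem \<sigma> e B)"
| "sem \<sigma> e (All A) = (\<forall>d. sem \<sigma> (case_nat d e) A)"
| "sem \<sigma> e (Ex A) = (\<exists>d. sem \<sigma> (case_nat d e) A)"

text \<open>Inserting the value d at index k of an environment: the semantic counterpart of
  instantiating (and of abstracting) the bound index k.\<close>
definition env_ins :: "nat \<Rightarrow> gterm \<Rightarrow> (nat \<Rightarrow> gterm) \<Rightarrow> nat \<Rightarrow> gterm" where
  "env_ins k d e = (\<lambda>n. if n < k then e n else if n = k then d else e (n - 1))"

lemma env_ins_Suc: "env_ins (Suc k) v (case_nat d e) = case_nat d (env_ins k v e)"
  by (rule ext) (auto simp: env_ins_def split: nat.splits)

lemma env_ins_0: "env_ins 0 d e = case_nat d e"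
  by (rule ext) (auto simp: env_ins_def split: nat.splits)

lemma evt_closed: "closed_tm t \<Longrightarrow> evt \<sigma> e t = evt \<sigma> e' t"
  by (induction t) auto

lemma evt_inst:
  "closed_tm t \<Longrightarrow> evt \<sigma> e (inst_tm k t u) = evt \<sigma> (env_ins k (evt \<sigma> e t) e) u"
  by (induction u) (auto simp: env_ins_def)

lemma sem_inst:
  "closed_tm t \<Longrightarrow> sem \<sigma> e (inst_fm k t A) = sem \<sigma> (env_ins k (evt \<sigma> e t) e) A"
proof (induction A arbitrary: k e)
  case (Atom P ts)
  then show ?case by (simp add: evt_inst comp_def)
next
  case (All A)
  have "\<And>d. evt \<sigma> (case_nat d e) t = evt \<sigma> e t" by (rule evt_closed[OF All.prems])
  then show ?case using All by (simp add: env_ins_Suc)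
next
  case (Ex A)
  have "\<And>d. evt \<sigma> (case_nat d e) t = evt \<sigma> e t" by (rule evt_closed[OF Ex.prems])
  then show ?case using Ex by (simp add: env_ins_Suc)
qed auto

lemma evt_abst: "evt \<sigma> (env_ins k d e) (abst_tm k x u) = evt (\<sigma>(x := d)) e u"
  by (induction u) (auto simp: env_ins_def)

lemma sem_abst: "sem \<sigma> (env_ins k d e) (abst_fm k x A) = sem (\<sigma>(x := d)) e A"
proof (induction A arbitrary: k e)
  case (Atom P ts)
  have "map (evt \<sigma> (env_ins k d e)) (map (abst_tm k x) ts) = map (evt (\<sigma>(x := d)) e) ts"
    by (simp add: evt_abst)
  then show ?case unfolding abst_fm.simps sem.simps by (rule arg_cong)
qed (simp_all add: env_ins_Suc[symmetric])

lemma evt_fv: "(\<forall>x\<in>fv_tm u. \<sigma> x = \<sigma>' x) \<Longrightarrow> evt \<sigma> e u = evt \<sigma>' e u"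
  by (induction u) auto

lemma sem_fv: "(\<forall>x\<in>fv_fm A. \<sigma> x = \<sigma>' x) \<Longrightarrow> sem \<sigma> e A = sem \<sigma>' e A"
proof (induction A arbitrary: e)
  case (Atom P ts)
  have "map (evt \<sigma> e) ts = map (evt \<sigma>' e) ts"
    using Atom.prems by (auto intro!: evt_fv)
  then show ?case unfolding sem.simps by (rule arg_cong)
qed auto

text \<open>The eigenvariable conditions are what allow changing the
  value of the eigenvariable in the quantifier rules.\<close>
theorem nd_sound: "nd G A \<Longrightarrow> \<forall>B\<in>set G. sem \<sigma> e B \<Longrightarrow> sem \<sigma> e A"
proof (induction arbitrary: \<sigma> e rule: nd.induct)
  case (DisjE G A B C)
  from DisjE.IH(1)[OF DisjE.prems] have "sem \<sigma> e A \<or> sem \<sigma> e B" by simp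
  then show ?case using DisjE.IH(2,3)[of \<sigma> e] DisjE.prems by auto
next
  case (AllI G x A)
  show ?case
  proof (simp, intro allI)
    fix d
    have "\<forall>B\<in>set G. sem (\<sigma>(x := d)) e B"
      using AllI.prems \<open>x \<notin> (\<Union>B\<in>set G. fv_fm B)\<close> sem_fv[of _ "\<sigma>(x := d)" \<sigma>] by auto
    then have "sem (\<sigma>(x := d)) e (inst_fm 0 (Fv x) A)" using AllI.IH by blast
    then have "sem (\<sigma>(x := d)) (case_nat d e) A" by (simp add: sem_inst env_ins_0)
    then show "sem \<sigma> (case_nat d e) A" using \<open>x \<notin> fv_fm A\<close> sem_fv[of A "\<sigma>(x := d)" \<sigma>] by auto
  qed
next
  case (ExE G A x B)
  from ExE.IH(1)[OF ExE.prems] obtain d where d: "sem \<sigma> (case_nat d e) A" by auto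
  have "\<forall>C\<in>set G. sem (\<sigma>(x := d)) e C"
    using ExE.prems ExE.hyps(5) sem_fv[of _ "\<sigma>(x := d)" \<sigma>] by auto
  moreover have "sem (\<sigma>(x := d)) e (inst_fm 0 (Fv x) A)"
    using d ExE.hyps(3) sem_fv[of A "\<sigma>(x := d)" \<sigma>] by (simp add: sem_inst env_ins_0)
  ultimately have "sem (\<sigma>(x := d)) e B" using ExE.IH(2) by auto
  then show ?case using ExE.hyps(4) sem_fv[of B "\<sigma>(x := d)" \<sigma>] by auto
qed (auto simp: sem_inst env_ins_0)

abbreviation all_abst :: "nat \<Rightarrow> fm \<Rightarrow> fm" where
  "all_abst x B \<equiv> All (abst_fm 0 x B)"

lemma sem_all_abst_foldr:
  "\<forall>\<sigma> e. sem \<sigma> e B \<Longrightarrow> sem \<sigma> e (foldr all_abst xs B)"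
proof (induction xs arbitrary: \<sigma> e)
  case (Cons x xs)
  show ?case using Cons sem_abst[of \<sigma> 0 _ e x, unfolded env_ins_0] by simp
qed simp

lemma sem_univ_closure: "\<forall>\<sigma> e. sem \<sigma> e B \<Longrightarrow> sem \<sigma> e (univ_closure B)"
  unfolding univ_closure_def by (rule sem_all_abst_foldr)

abbreviation quint :: "tm \<Rightarrow> tm \<Rightarrow> tm \<Rightarrow> tm \<Rightarrow> tm \<Rightarrow> tm \<Rightarrow> tm" where
  "quint q s p r d j \<equiv> CDot q (CDot s (CDot p (CDot r (CDot d j))))"

definition B1f :: fm where
  "B1f = Imp (TT (Fv 5) (Fv 7) (Fv 6))
             (UU CEmp CEmp (CDot (Fv 7) CEmp) COne (Fv 5) (Fv 5) (Fv 6))"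
definition B2f :: fm where
  "B2f = Imp (UU CEmp CEmp (CDot (Fv 7) CEmp) COne (Fv 5) (Fv 5) (Fv 6))
             (TT (Fv 5) (Fv 7) (Fv 6))"
definition B3f :: fm where
  "B3f = UU (Fv 0) (Fv 1) (Fv 2) CZero (Fv 5) (Fv 5) (Fv 0)"
definition B4f :: fm where
  "B4f = Imp (UU (Fv 0) (Fv 8) (CDot (Fv 9) (Fv 2)) (Fv 10) (Fv 5) (Fv 5) (Fv 6))
             (UU (CDot (Fv 0) (Fv 8)) (Fv 1) (Fv 2) (Fv 3)
                 (quint (Fv 3) (Fv 1) (Fv 10) (Fv 9) CZero (Fv 4)) (Fv 5) (Fv 6))"
definition B5f :: fm where
  "B5f = Imp (UU (CDot (Fv 0) (Fv 9)) (Fv 8) (Fv 2) (Fv 10) (Fv 5) (Fv 5) (Fv 6))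
             (UU (Fv 0) (Fv 1) (CDot (Fv 8) (Fv 2)) (Fv 3)
                 (quint (Fv 3) (Fv 1) (Fv 10) (Fv 9) COne (Fv 4)) (Fv 5) (Fv 6))"
definition B6f :: fm where
  "B6f = Imp (UU (Fv 0) (Fv 1) (Fv 2) (Fv 3) (Fv 4) (Fv 5) (Fv 6))
             (UU (Fv 0) (Fv 1) (Fv 2) (Fv 3)
                 (quint (Fv 12) (Fv 13) (Fv 10) (Fv 9) (Fv 11) (Fv 4)) (Fv 5) (Fv 6))"

lemma axB_clauses:
  "axB = Conj (univ_closure B1f) (Conj (univ_closure B2f) (Conj (univ_closure B3f)
           (Conj (univ_closure B4f) (Conj (univ_closure B5f) (univ_closure B6f)))))"
  unfolding axB_def Let_def B1f_def B2f_def B3f_def B4f_def B5f_def B6f_def ..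

text \<open>B holds in the intended interpretation: clauses (1),(2) are the definition of
  Tsem and clauses (3)-(6) are the introduction rules of Ured.\<close>
lemma axB_true: "sem \<sigma> e axB"
  unfolding axB_clauses
  by (intro sem.simps(4)[THEN iffD2] conjI sem_univ_closure allI)
     (auto simp: B1f_def B2f_def B3f_def B4f_def B5f_def B6f_def TT_def UU_def Tsem_def
           intro: Ured.intros)

lemma evt_emb: "evt \<sigma> e (emb g) = g"
  by (induction g) auto

lemma nd_TT_sound: "nd [axB] (TT (emb i) (emb a) (emb u)) \<Longrightarrow> Tsem i a u"
  using nd_sound[of "[axB]" _ "\<lambda>_. GEmp" "\<lambda>_. GEmp"] axB_true[of "\<lambda>_. GEmp" "\<lambda>_. GEmp"]
  by (fastforce simp: TT_def evt_emb)

section \<open>Ground instances of universal closures\<close>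

fun subt :: "(nat \<Rightarrow> tm) \<Rightarrow> tm \<Rightarrow> tm" where
  "subt \<rho> (Fv x) = \<rho> x"
| "subt \<rho> (CDot a b) = CDot (subt \<rho> a) (subt \<rho> b)"
| "subt \<rho> u = u"

fun subf :: "(nat \<Rightarrow> tm) \<Rightarrow> fm \<Rightarrow> fm" where
  "subf \<rho> Bot = Bot"
| "subf \<rho> (Atom P ts) = Atom P (map (subt \<rho>) ts)"
| "subf \<rho> (Imp A B) = Imp (subf \<rho> A) (subf \<rho> B)"
| "subf \<rho> (Conj A B) = Conj (subf \<rho> A) (subf \<rho> B)"
| "subf \<rho> (Disj A B) = Disj (subf \<rho> A) (subf \<rho> B)"
| "subf \<rho> (All A) = All (subf \<rho> A)"
| "subf \<rho> (Ex A) = Ex (subf \<rho> A)"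

lemma subt_Fv: "subt Fv u = u"
  by (induction u) auto

lemma subf_Fv: "subf Fv A = A"
  by (induction A) (auto simp: subt_Fv map_idI)

lemma inst_abst_tm: "inst_tm k t (abst_tm k x u) = subt (Fv(x := t)) u"
  by (induction u) auto

lemma inst_abst_fm: "inst_fm k t (abst_fm k x A) = subf (Fv(x := t)) A"
  by (induction A arbitrary: k) (auto simp: inst_abst_tm)

lemma abst_tm_ground: "closed_tm u \<Longrightarrow> y \<notin> fv_tm u \<Longrightarrow> abst_tm k y u = u"
  by (induction u) auto

lemma subt_abst:
  assumes "\<rho> y = Fv y" "\<forall>z. z \<noteq> y \<longrightarrow> closed_tm (\<rho> z) \<and> y \<notin> fv_tm (\<rho> z)"
  shows "subt \<rho> (abst_tm k y u) = abst_tm k y (subt \<rho> u)"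
  using assms by (induction u) (auto simp: abst_tm_ground)

lemma subf_abst:
  assumes "\<rho> y = Fv y" "\<forall>z. z \<noteq> y \<longrightarrow> closed_tm (\<rho> z) \<and> y \<notin> fv_tm (\<rho> z)"
  shows "subf \<rho> (abst_fm k y A) = abst_fm k y (subf \<rho> A)"
  using assms by (induction A arbitrary: k) (auto simp: subt_abst)

lemma subf_all_abst_foldr:
  assumes "x \<notin> set xs" "closed_tm t" "fv_tm t = {}"
  shows "subf (Fv(x := t)) (foldr all_abst xs C) = foldr all_abst xs (subf (Fv(x := t)) C)"
  using assms by (induction xs) (auto simp: subf_abst)

lemma subt_ground: "fv_tm u = {} \<Longrightarrow> subt \<rho> u = u"
  by (induction u) auto

lemma subt_comp: "subt \<rho>1 (subt \<rho>2 u) = subt (\<lambda>y. subt \<rho>1 (\<rho>2 y)) u"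
  by (induction u) auto

lemma subf_comp: "subf \<rho>1 (subf \<rho>2 A) = subf (\<lambda>y. subt \<rho>1 (\<rho>2 y)) A"
  by (induction A) (auto simp: subt_comp)

lemma nd_all_abst_foldr_inst:
  assumes "distinct xs" "\<forall>x\<in>set xs. closed_tm (\<rho> x) \<and> fv_tm (\<rho> x) = {}"
    and "nd G (foldr all_abst xs C)"
  shows "nd G (subf (\<lambda>y. if y \<in> set xs then \<rho> y else Fv y) C)"
  using assms
proof (induction xs arbitrary: C)
  case Nil
  then show ?case by (simp add: subf_Fv eta_contract_eq)
next
  case (Cons x xs)
  have "nd G (inst_fm 0 (\<rho> x) (abst_fm 0 x (foldr all_abst xs C)))"
    using Cons.prems by (auto intro: nd.AllE)
  then have "nd G (foldr all_abst xs (subf (Fv(x := \<rho> x)) C))"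
    using Cons.prems by (simp add: inst_abst_fm subf_all_abst_foldr)
  then have "nd G (subf (\<lambda>y. if y \<in> set xs then \<rho> y else Fv y) (subf (Fv(x := \<rho> x)) C))"
    using Cons by auto
  moreover have "(\<lambda>y. subt (\<lambda>y. if y \<in> set xs then \<rho> y else Fv y) ((Fv(x := \<rho> x)) y))
       = (\<lambda>y. if y \<in> set (x # xs) then \<rho> y else Fv y)"
    using Cons.prems by (auto simp: subt_ground)
  ultimately show ?case by (simp add: subf_comp)
qed

lemma subt_fv: "\<forall>x\<in>fv_tm u. \<rho> x = \<rho>' x \<Longrightarrow> subt \<rho> u = subt \<rho>' u"
  by (induction u) auto

lemma subf_fv: "\<forall>x\<in>fv_fm A. \<rho> x = \<rho>' x \<Longrightarrow> subf \<rho> A = subf \<rho>' A"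
  by (induction A) (auto intro: subt_fv)

lemma finite_fv_tm: "finite (fv_tm u)"
  by (induction u) auto

lemma finite_fv_fm: "finite (fv_fm A)"
  by (induction A) (auto simp: finite_fv_tm)

lemma emb_closed: "closed_tm (emb g)"
  by (induction g) auto

lemma emb_fv: "fv_tm (emb g) = {}"
  by (induction g) auto

lemma nd_univ_closure_inst:
  assumes "nd G (univ_closure B)"
  shows "nd G (subf (\<lambda>x. emb (g x)) B)"
proof -
  let ?xs = "sorted_list_of_set (fv_fm B)"
  have "nd G (subf (\<lambda>y. if y \<in> set ?xs then emb (g y) else Fv y) B)"
    using nd_all_abst_foldr_inst[of ?xs "\<lambda>x. emb (g x)" G B] assms
    by (simp add: univ_closure_def emb_closed emb_fv)
  moreover have "subf (\<lambda>y. if y \<in> set ?xs then emb (g y) else Fv y) B = subf (\<lambda>x. emb (g x)) B"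
    by (rule subf_fv) (simp add: finite_fv_fm)
  ultimately show ?thesis by simp
qed

section \<open>Completeness for true ground U- and T-atoms\<close>

lemma nd_axB_clauses:
  "nd [axB] (univ_closure B1f)" "nd [axB] (univ_closure B2f)" "nd [axB] (univ_closure B3f)"
  "nd [axB] (univ_closure B4f)" "nd [axB] (univ_closure B5f)" "nd [axB] (univ_closure B6f)"
  using nd.Assum[of axB "[axB]"] unfolding axB_clauses by (simp_all, meson nd.ConjE1 nd.ConjE2)+

lemma nd_mp_inst:
  assumes "nd G (univ_closure (Imp A B))"
    and "subf (\<lambda>x. emb (g x)) A = A'" "subf (\<lambda>x. emb (g x)) B = B'" "nd G A'"
  shows "nd G B'"
  using nd_univ_closure_inst[OF assms(1), of g] assms(2-4) nd.ImpE by fastforce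

text \<open>Every true ground U-atom is derivable from B, by rule induction along the
  computation: each computation step is an instance of one of clauses (3)-(6).\<close>
lemma Ured_derivable:
  "Ured x s z q j i u \<Longrightarrow>
   nd [axB] (UU (emb x) (emb s) (emb z) (emb q) (emb j) (emb i) (emb u))"
proof (induction rule: Ured.induct)
  case (halt x s z i)
  show ?case
    using nd_univ_closure_inst[OF nd_axB_clauses(3), of "(!) [x, s, z, GEmp, GEmp, i]"]
    by (simp add: B3f_def UU_def)
next
  case (left x v r z p i u s q j)
  show ?case
    by (rule nd_mp_inst[OF nd_axB_clauses(4)[unfolded B4f_def] _ _ left.IH,
          where g = "(!) [x, s, z, q, j, i, u, GEmp, v, r, p]"]) (simp_all add: UU_def)
next
  case (right x r v z p i u s q j)
  show ?case
    by (rule nd_mp_inst[OF nd_axB_clauses(5)[unfolded B5f_def] _ _ right.IH,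
          where g = "(!) [x, s, z, q, j, i, u, GEmp, v, r, p]"]) (simp_all add: UU_def)
next
  case (skip x s z q j i u q' s' p r d)
  show ?case
    by (rule nd_mp_inst[OF nd_axB_clauses(6)[unfolded B6f_def] _ _ skip.IH,
          where g = "(!) [x, s, z, q, j, i, u, GEmp, GEmp, r, p, d, q', s']"]) (simp_all add: UU_def)
qed

theorem nd_TT_iff_Tsem: "nd [axB] (TT (emb i) (emb a) (emb u)) \<longleftrightarrow> Tsem i a u"
proof
  assume "Tsem i a u"
  then have "nd [axB] (UU (emb GEmp) (emb GEmp) (emb (a \<cdot> GEmp)) (emb GOne) (emb i) (emb i) (emb u))"
    unfolding Tsem_def by (rule Ured_derivable)
  then show "nd [axB] (TT (emb i) (emb a) (emb u))"
    by (rule nd_mp_inst[OF nd_axB_clauses(2)[unfolded B2f_def] _ _,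
          where g = "(!) [GEmp, GEmp, GEmp, GEmp, GEmp, i, u, a]", rotated 2])
       (simp_all add: UU_def TT_def)
qed (rule nd_TT_sound)

lemma Udec_Tsem_unsat:
  assumes "i \<in> Udec enc"
  shows "Tsem i (enc F \<cdot> GEmp) (GEmp \<cdot> GOne) \<longleftrightarrow> \<not> satisfiable F"
  using assms by (cases "satisfiable F") (auto simp: Udec_def halts_with_def)

lemma satisfiable_PNeg: "satisfiable (PNeg F) \<longleftrightarrow> \<not> tautology F"
  by (simp add: satisfiable_def tautology_def)

theorem corollary4:
  fixes enc :: "form \<Rightarrow> gterm" and i :: gterm and F :: form
  assumes "i \<in> Udec enc"
  shows "nd [axB] (TT (emb i) (emb (enc (PNeg F) \<cdot> GEmp)) (emb (GEmp \<cdot> GOne)))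
           \<longleftrightarrow> tautology F"
proof -
  have "nd [axB] (TT (emb i) (emb (enc (PNeg F) \<cdot> GEmp)) (emb (GEmp \<cdot> GOne)))
          \<longleftrightarrow> Tsem i (enc (PNeg F) \<cdot> GEmp) (GEmp \<cdot> GOne)"
    by (rule nd_TT_iff_Tsem)
  also have "\<dots> \<longleftrightarrow> \<not> satisfiable (PNeg F)"
    using assms by (rule Udec_Tsem_unsat)
  also have "\<dots> \<longleftrightarrow> tautology F"
    by (simp add: satisfiable_PNeg)
  finally show ?thesis .
qed

end
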